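(* Let $E_1,H_1,\dots,E_n,H_n$ be logically independent events, $\mathcal F_k=\{E_1|H_1,\dots,E_k|H_k\}$, and $(p_1,\dots,p_n)\in[0,1]^n$ an assessment on $\mathcal F_n$. For each $k=2,\dots,n$, the set of coherent extensions of $(p_1,\dots,p_k)$ to the quasi disjunction $\mathcal D(\mathcal F_k)=\big(\bigvee_{i=1}^kE_iH_i\big)\,|\,\big(\bigvee_{i=1}^kH_i\big)$ is the interval $[l_k,u_k]$ with $l_k=T_0^H(p_1,\dots,p_k)$ and $u_k=S_L(p_1,\dots,p_k)=\min(p_1+\dots+p_k,1)$. *)

theory Defs
  imports Main "HOL.Real"
begin

definition logically_independent :: "('i \<Rightarrow> 'a set) \<Rightarrow> 'i set \<Rightarrow> bool" where
  "logically_independent F I \<longleftrightarrow>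
     (\<forall>S \<subseteq> I. \<exists>\<omega>. \<forall>i\<in>I. (\<omega> \<in> F i \<longleftrightarrow> i \<in> S))"

(* Coherence (de Finetti / Gilio betting scheme) of an assessment p on the family of
   conditional events E j | H j, j \<in> I: for every nonempty finite subfamily J and
   every choice of stakes s, the random gain
     G = sum_{j in J} s_j * I_{H_j} * (I_{E_j} - p_j)
   restricted to the disjunction of the conditioning events of J has
   nonnegative maximum (i.e. takes some nonnegative value there; G takes only
   finitely many values). *)
definition coherent :: "('i \<Rightarrow> 'a set) \<Rightarrow> ('i \<Rightarrow> 'a set) \<Rightarrow> ('i \<Rightarrow> real) \<Rightarrow> 'i set \<Rightarrow> bool" where
  "coherent E H p I \<longleftrightarrow>
     (\<forall>J \<subseteq> I. J \<noteq> {} \<longrightarrow> finite J \<longrightarrow>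
        (\<forall>s :: 'i \<Rightarrow> real. \<exists>\<omega> \<in> (\<Union>j\<in>J. H j).
           (\<Sum>j\<in>J. s j * of_bool (\<omega> \<in> H j) * (of_bool (\<omega> \<in> E j) - p j)) \<ge> 0))"

definition hamacher0 :: "real \<Rightarrow> real \<Rightarrow> real" where
  "hamacher0 x y = (if x = 0 \<and> y = 0 then 0 else x * y / (x + y - x * y))"

definition T0H :: "real list \<Rightarrow> real" where
  "T0H xs = foldl hamacher0 1 xs"

(* Family F_k \<union> {D(F_k)}: index 0 is the quasi disjunction
   (\<Or>_{i=1..k} E_i H_i) | (\<Or>_{i=1..k} H_i), indices 1..k are E_i | H_i. *)
definition qdE :: "(nat \<Rightarrow> 'a set) \<Rightarrow> (nat \<Rightarrow> 'a set) \<Rightarrow> nat \<Rightarrow> nat \<Rightarrow> 'a set" where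
  "qdE E H k j = (if j = 0 then (\<Union>i\<in>{1..k}. E i \<inter> H i) else E j)"

definition qdH :: "(nat \<Rightarrow> 'a set) \<Rightarrow> nat \<Rightarrow> nat \<Rightarrow> 'a set" where
  "qdH H k j = (if j = 0 then (\<Union>i\<in>{1..k}. H i) else H j)"

definition qdP :: "(nat \<Rightarrow> real) \<Rightarrow> real \<Rightarrow> nat \<Rightarrow> real" where
  "qdP p z j = (if j = 0 then z else p j)"

end

theory Submission
  imports Defs
begin

text \<open>
  On \<open>H\<^sub>0 = H\<^sub>1 \<or> \<dots> \<or> H\<^sub>k\<close> the gain of a bet on \<open>F\<^sub>k \<union> {D(F\<^sub>k)}\<close> depends only on which
  \<open>E\<^sub>i\<close> and \<open>H\<^sub>i\<close> hold, and by logical independence every such constituent is possible.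
  Subfamilies without the quasi disjunction are coherent for any assessment in \<open>[0,1]\<close> (take the
  constituent where \<open>E\<^sub>i\<close> holds iff the stake on \<open>E\<^sub>i | H\<^sub>i\<close> is nonnegative), so \<open>z\<close> is a coherent
  extension iff for all stakes some constituent inside \<open>H\<^sub>0\<close> has nonnegative gain.

  Necessity: the stakes \<open>(1, -1, \<dots>, -1)\<close> and \<open>(-1, l/p\<^sub>1, \<dots>, l/p\<^sub>k)\<close>, where
  \<open>1/l = 1 + \<Sum>(1/p\<^sub>i - 1)\<close> is the additive-generator form of \<open>l = T\<^sub>0\<^sup>H(p)\<close>, give a gain of at
  most \<open>\<Sum>p\<^sub>i - z\<close>, resp. \<open>z - l\<close>, on every constituent.
  Sufficiency: if the stake on the quasi disjunction is nonpositive, weight the constituent where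
  all \<open>E\<^sub>i H\<^sub>i\<close> hold by 1 and those where only \<open>H\<^sub>i\<close> holds by \<open>(1 - p\<^sub>i)/p\<^sub>i\<close>; if it is nonnegative
  and no stake on an \<open>E\<^sub>i | H\<^sub>i\<close> is positive (otherwise the constituent where all \<open>H\<^sub>i\<close> hold
  and \<open>E\<^sub>i\<close> holds exactly for the positive stakes has nonnegative gain), weight the constituents
  where all \<open>H\<^sub>i\<close> and exactly one \<open>E\<^sub>i\<close> hold by \<open>p\<^sub>i\<close> and the one where all \<open>H\<^sub>i\<close> and no \<open>E\<^sub>i\<close> hold by \<open>max (\<Sum>p\<^sub>i) 1 - \<Sum>p\<^sub>i\<close>. The
  stakes on the \<open>E\<^sub>i | H\<^sub>i\<close> then cancel in the weighted sum of the gains, up to a term of the right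
  sign, and the rest is nonnegative because \<open>l \<le> z\<close>, resp. \<open>z \<le> min (\<Sum>p\<^sub>i) 1\<close>.
\<close>

section \<open>The Hamacher product\<close>

lemma hamacher0_reciprocal:
  assumes "x \<noteq> 0" "y \<noteq> 0"
  shows "1 / hamacher0 x y = 1 / x + 1 / y - 1"
  using assms by (simp add: hamacher0_def field_simps)

lemma hamacher0_unit_interval:
  assumes "0 < x" "x \<le> 1" "0 < y" "y \<le> 1"
  shows "0 < hamacher0 x y \<and> hamacher0 x y \<le> 1"
proof -
  have "1 \<le> 1 / x" "1 \<le> 1 / y" using assms by simp_all
  moreover have "1 / hamacher0 x y = 1 / x + 1 / y - 1" using assms by (simp add: hamacher0_reciprocal)
  ultimately have "1 \<le> 1 / hamacher0 x y" by linarith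
  then show ?thesis by (auto simp: le_divide_eq_1)
qed

lemma foldl_hamacher0_reciprocal:
  assumes "0 < a" "a \<le> 1" "\<forall>x\<in>set xs. 0 < x \<and> x \<le> 1"
  shows "1 / foldl hamacher0 a xs = 1 / a + (\<Sum>x\<leftarrow>xs. 1 / x - 1)"
  using assms
proof (induction xs arbitrary: a)
  case (Cons x xs)
  then have "0 < hamacher0 a x \<and> hamacher0 a x \<le> 1"
    by (simp add: hamacher0_unit_interval)
  with Cons show ?case by (simp add: hamacher0_reciprocal)
qed simp

lemma foldl_hamacher0_zero_mem:
  assumes "0 \<in> set xs"
  shows "foldl hamacher0 a xs = 0"
proof -
  have "foldl hamacher0 0 ys = 0" for ys
    by (induction ys) (simp_all add: hamacher0_def)
  with assms show ?thesis
    by (induction xs arbitrary: a) (auto simp: hamacher0_def)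
qed

lemma T0H_eq_reciprocal_sum:
  assumes "\<forall>i\<in>{1..k}. 0 < p i \<and> p i \<le> 1"
  shows "T0H (map p [1..<k+1]) = 1 / (1 + (\<Sum>i=1..k. 1 / p i - 1))"
proof -
  have "(\<Sum>x\<leftarrow>map p [1..<k+1]. 1 / x - 1) = (\<Sum>i=1..k. 1 / p i - 1)"
    by (simp only: map_map interv_sum_list_conv_sum_set_nat set_upt atLeastLessThanSuc_atLeastAtMost
        Suc_eq_plus1[symmetric] comp_def)
  moreover have "1 / T0H (map p [1..<k+1]) = 1 + (\<Sum>x\<leftarrow>map p [1..<k+1]. 1 / x - 1)"
    unfolding T0H_def using assms by (subst foldl_hamacher0_reciprocal) auto
  ultimately show ?thesis by (metis divide_divide_eq_right div_by_1 mult_1)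
qed

lemma T0H_eq_zero:
  assumes "i \<in> {1..k}" "p i = 0"
  shows "T0H (map p [1..<k+1]) = 0"
proof -
  have "i \<in> set [1..<k+1]" using assms(1) by (simp only: set_upt) auto
  then have "0 \<in> p ` set [1..<k+1]" using assms(2) by (metis image_eqI)
  then show ?thesis unfolding T0H_def by (intro foldl_hamacher0_zero_mem) simp
qed

section \<open>Reduction of coherence to constituents\<close>

definition bet_gain ::
    "('i \<Rightarrow> 'a set) \<Rightarrow> ('i \<Rightarrow> 'a set) \<Rightarrow> ('i \<Rightarrow> real) \<Rightarrow> 'i set \<Rightarrow> ('i \<Rightarrow> real) \<Rightarrow> 'a \<Rightarrow> real" where
  "bet_gain E H p J s \<omega> = (\<Sum>j\<in>J. s j * of_bool (\<omega> \<in> H j) * (of_bool (\<omega> \<in> E j) - p j))"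

lemma coherent_iff_bet_gain:
  "coherent E H p I \<longleftrightarrow>
     (\<forall>J \<subseteq> I. J \<noteq> {} \<longrightarrow> finite J \<longrightarrow> (\<forall>s. \<exists>\<omega> \<in> (\<Union>j\<in>J. H j). 0 \<le> bet_gain E H p J s \<omega>))"
  by (simp add: coherent_def bet_gain_def)

lemma bet_gain_zero_extension:
  assumes "J \<subseteq> I" "finite I"
  shows "bet_gain E H p J s \<omega> = bet_gain E H p I (\<lambda>j. if j \<in> J then s j else 0) \<omega>"
proof -
  have "bet_gain E H p I (\<lambda>j. if j \<in> J then s j else 0) \<omega>
      = (\<Sum>j\<in>I. if j \<in> J then s j * of_bool (\<omega> \<in> H j) * (of_bool (\<omega> \<in> E j) - p j) else 0)"
    unfolding bet_gain_def by (rule sum.cong) simp_all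
  also have "\<dots> = bet_gain E H p (I \<inter> J) s \<omega>"
    unfolding bet_gain_def using assms(2) by (simp add: sum.inter_restrict)
  finally show ?thesis using assms(1) by (simp add: Int_absorb1)
qed

lemma logically_independent_constituent:
  assumes "logically_independent (\<lambda>(i, b). if b then E i else H i) ({1..n} \<times> UNIV)"
  shows "\<exists>\<omega>. \<forall>i\<in>{1..n}. (\<omega> \<in> E i \<longleftrightarrow> i \<in> A) \<and> (\<omega> \<in> H i \<longleftrightarrow> i \<in> B)"
proof -
  let ?S = "{(i, b). i \<in> {1..n} \<and> i \<in> (if b then A else B)}"
  have "?S \<subseteq> {1..n} \<times> UNIV" by blast
  then obtain \<omega> where \<omega>: "\<forall>x\<in>{1..n} \<times> UNIV. \<omega> \<in> (\<lambda>(i, b). if b then E i else H i) x \<longleftrightarrow> x \<in> ?S"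
    using assms unfolding logically_independent_def by blast
  show ?thesis
  proof (intro exI ballI)
    fix i assume "i \<in> {1..n}"
    then show "(\<omega> \<in> E i \<longleftrightarrow> i \<in> A) \<and> (\<omega> \<in> H i \<longleftrightarrow> i \<in> B)"
      using \<omega>[rule_format, of "(i, True)"] \<omega>[rule_format, of "(i, False)"] by simp
  qed
qed

lemma exists_bet_gain_nonneg_if_all_constituents:
  assumes "J \<noteq> {}" "\<forall>j\<in>J. 0 \<le> p j \<and> p j \<le> 1"
    and constituent: "\<And>A. \<exists>\<omega>. \<forall>j\<in>J. \<omega> \<in> H j \<and> (\<omega> \<in> E j \<longleftrightarrow> j \<in> A)"
  shows "\<exists>\<omega>\<in>(\<Union>j\<in>J. H j). 0 \<le> bet_gain E H p J s \<omega>"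
proof -
  obtain \<omega> where \<omega>: "\<forall>j\<in>J. \<omega> \<in> H j \<and> (\<omega> \<in> E j \<longleftrightarrow> 0 \<le> s j)"
    using constituent[of "{j. 0 \<le> s j}"] by auto
  have "0 \<le> s j * of_bool (\<omega> \<in> H j) * (of_bool (\<omega> \<in> E j) - p j)" if "j \<in> J" for j
    using \<omega> assms(2) that by (cases "0 \<le> s j") (simp_all add: mult_nonpos_nonneg)
  then have "0 \<le> bet_gain E H p J s \<omega>" unfolding bet_gain_def by (rule sum_nonneg)
  moreover have "\<omega> \<in> (\<Union>j\<in>J. H j)" using \<omega> \<open>J \<noteq> {}\<close> by blast
  ultimately show ?thesis by blast
qed

text \<open>\<open>A\<close> and \<open>B\<close> are the sets of indices \<open>i \<in> {1..k}\<close> for which \<open>E i\<close>, resp. \<open>H i\<close>, holds in the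
  constituent, and \<open>s 0\<close> is the stake on the quasi disjunction. The constituent lies in
  \<open>H\<^sub>1 \<or> \<dots> \<or> H\<^sub>k\<close> iff \<open>B\<close> meets \<open>{1..k}\<close>.\<close>

definition constituent_gain ::
    "nat \<Rightarrow> (nat \<Rightarrow> real) \<Rightarrow> real \<Rightarrow> (nat \<Rightarrow> real) \<Rightarrow> nat set \<Rightarrow> nat set \<Rightarrow> real" where
  "constituent_gain k p z s A B =
     s 0 * (of_bool (A \<inter> B \<inter> {1..k} \<noteq> {}) - z)
     + (\<Sum>j=1..k. s j * of_bool (j \<in> B) * (of_bool (j \<in> A) - p j))"

lemma constituent_gain_cong:
  assumes "A \<inter> {1..k} = A' \<inter> {1..k}" "B \<inter> {1..k} = B' \<inter> {1..k}"
  shows "constituent_gain k p z s A B = constituent_gain k p z s A' B'"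
proof -
  have "A \<inter> B \<inter> {1..k} = A' \<inter> B' \<inter> {1..k}" using assms by blast
  moreover have "j \<in> A \<longleftrightarrow> j \<in> A'" "j \<in> B \<longleftrightarrow> j \<in> B'" if "j \<in> {1..k}" for j
    using assms that by blast+
  ultimately show ?thesis
    unfolding constituent_gain_def by (intro arg_cong2[where f = "(+)"] sum.cong) simp_all
qed

lemma constituent_gain_all_conditioning:
  "constituent_gain k p z s A {1..k}
     = s 0 * (of_bool (A \<inter> {1..k} \<noteq> {}) - z) + (\<Sum>j=1..k. s j * (of_bool (j \<in> A) - p j))"
  unfolding constituent_gain_def by (simp add: Int_absorb2)

lemma constituent_gain_single_conditioning:
  assumes "i \<in> {1..k}"
  shows "constituent_gain k p z s {} {i} = - s 0 * z - s i * p i"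
proof -
  have "(\<Sum>j=1..k. s j * of_bool (j \<in> {i}) * (of_bool (j \<in> {}) - p j))
      = (\<Sum>j=1..k. if j = i then - s j * p j else 0)"
    by (rule sum.cong) auto
  with assms show ?thesis unfolding constituent_gain_def by simp
qed

lemma UN_qdH:
  assumes "0 \<in> J" "J \<subseteq> {0..k}"
  shows "(\<Union>j\<in>J. qdH H k j) = (\<Union>i\<in>{1..k}. H i)"
proof -
  have "qdH H k j \<subseteq> (\<Union>i\<in>{1..k}. H i)" if "j \<in> J" for j
    using that assms(2) by (cases "j = 0") (force simp: qdH_def)+
  moreover have "qdH H k 0 = (\<Union>i\<in>{1..k}. H i)" by (simp add: qdH_def)
  ultimately show ?thesis using assms(1) by blast
qed

lemma bet_gain_qd_eq_constituent_gain:
  assumes "\<omega> \<in> (\<Union>i\<in>{1..k}. H i)"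
  shows "bet_gain (qdE E H k) (qdH H k) (qdP p z) {0..k} s \<omega>
       = constituent_gain k p z s {i. \<omega> \<in> E i} {i. \<omega> \<in> H i}"
proof -
  have "{0..k} = insert 0 {1..k}" by auto
  moreover have "(\<omega> \<in> (\<Union>i\<in>{1..k}. E i \<inter> H i)) \<longleftrightarrow> {i. \<omega> \<in> E i} \<inter> {i. \<omega> \<in> H i} \<inter> {1..k} \<noteq> {}"
    by blast
  ultimately show ?thesis
    using assms unfolding bet_gain_def constituent_gain_def
    by (simp add: qdE_def qdH_def qdP_def)
qed

definition qd_avoids_sure_loss :: "nat \<Rightarrow> (nat \<Rightarrow> real) \<Rightarrow> real \<Rightarrow> bool" where
  "qd_avoids_sure_loss k p z \<longleftrightarrow>
     (\<forall>s. \<exists>A B. B \<inter> {1..k} \<noteq> {} \<and> 0 \<le> constituent_gain k p z s A B)"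

lemma coherent_qd_imp_avoids_sure_loss:
  assumes "coherent (qdE E H k) (qdH H k) (qdP p z) {0..k}"
  shows "qd_avoids_sure_loss k p z"
  unfolding qd_avoids_sure_loss_def
proof
  fix s
  have "\<exists>\<omega>\<in>(\<Union>j\<in>{0..k}. qdH H k j). 0 \<le> bet_gain (qdE E H k) (qdH H k) (qdP p z) {0..k} s \<omega>"
    by (rule assms[unfolded coherent_iff_bet_gain, rule_format]) auto
  then obtain \<omega> where \<omega>: "\<omega> \<in> (\<Union>i\<in>{1..k}. H i)"
    and gain: "0 \<le> bet_gain (qdE E H k) (qdH H k) (qdP p z) {0..k} s \<omega>"
    using UN_qdH[of "{0..k}" k H] by auto
  have "{i. \<omega> \<in> H i} \<inter> {1..k} \<noteq> {}" using \<omega> by blast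
  moreover have "0 \<le> constituent_gain k p z s {i. \<omega> \<in> E i} {i. \<omega> \<in> H i}"
    using gain by (simp only: bet_gain_qd_eq_constituent_gain[OF \<omega>])
  ultimately show "\<exists>A B. B \<inter> {1..k} \<noteq> {} \<and> 0 \<le> constituent_gain k p z s A B"
    by (intro exI conjI)
qed

lemma exists_bet_gain_qd_nonneg_if_avoids_sure_loss:
  assumes "qd_avoids_sure_loss k p z" "0 \<in> J" "J \<subseteq> {0..k}"
    and constituent: "\<And>A B. \<exists>\<omega>. \<forall>i\<in>{1..k}. (\<omega> \<in> E i \<longleftrightarrow> i \<in> A) \<and> (\<omega> \<in> H i \<longleftrightarrow> i \<in> B)"
  shows "\<exists>\<omega>\<in>(\<Union>j\<in>J. qdH H k j). 0 \<le> bet_gain (qdE E H k) (qdH H k) (qdP p z) J s \<omega>"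
proof -
  define s' where "s' = (\<lambda>j. if j \<in> J then s j else 0)"
  obtain A B where B: "B \<inter> {1..k} \<noteq> {}" and gain: "0 \<le> constituent_gain k p z s' A B"
    using assms(1) unfolding qd_avoids_sure_loss_def by meson
  obtain \<omega> where \<omega>: "\<forall>i\<in>{1..k}. (\<omega> \<in> E i \<longleftrightarrow> i \<in> A) \<and> (\<omega> \<in> H i \<longleftrightarrow> i \<in> B)"
    using constituent by blast
  have H0: "\<omega> \<in> (\<Union>i\<in>{1..k}. H i)" using \<omega> B by blast
  have "constituent_gain k p z s' A B = constituent_gain k p z s' {i. \<omega> \<in> E i} {i. \<omega> \<in> H i}"
    using \<omega> by (intro constituent_gain_cong) blast+
  also have "\<dots> = bet_gain (qdE E H k) (qdH H k) (qdP p z) {0..k} s' \<omega>"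
    by (rule bet_gain_qd_eq_constituent_gain[OF H0, symmetric])
  also have "\<dots> = bet_gain (qdE E H k) (qdH H k) (qdP p z) J s \<omega>"
    unfolding s'_def by (rule bet_gain_zero_extension[OF assms(3), symmetric]) simp
  finally have "0 \<le> bet_gain (qdE E H k) (qdH H k) (qdP p z) J s \<omega>" using gain by simp
  moreover have "\<omega> \<in> (\<Union>j\<in>J. qdH H k j)" using H0 UN_qdH[OF assms(2,3), of H] by simp
  ultimately show ?thesis by blast
qed

lemma coherent_qd_if_avoids_sure_loss:
  assumes indep: "logically_independent (\<lambda>(i, b). if b then E i else H i) ({1..n} \<times> UNIV)"
    and "k \<le> n" and p01: "\<forall>i\<in>{1..k}. 0 \<le> p i \<and> p i \<le> 1"
    and avoids: "qd_avoids_sure_loss k p z"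
  shows "coherent (qdE E H k) (qdH H k) (qdP p z) {0..k}"
  unfolding coherent_iff_bet_gain
proof (intro allI impI)
  fix J s assume J: "J \<subseteq> {0..k}" "J \<noteq> {}"
  have constituent: "\<exists>\<omega>. \<forall>i\<in>{1..k}. (\<omega> \<in> E i \<longleftrightarrow> i \<in> A) \<and> (\<omega> \<in> H i \<longleftrightarrow> i \<in> B)" for A B
    using logically_independent_constituent[OF indep] \<open>k \<le> n\<close> by fastforce
  show "\<exists>\<omega>\<in>(\<Union>j\<in>J. qdH H k j). 0 \<le> bet_gain (qdE E H k) (qdH H k) (qdP p z) J s \<omega>"
  proof (cases "0 \<in> J")
    case True
    with avoids J(1) constituent show ?thesis
      by (intro exists_bet_gain_qd_nonneg_if_avoids_sure_loss)
  next
    case False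
    with J(1) have J1: "J \<subseteq> {1..k}" by (auto simp: subset_iff Suc_le_eq) (metis gr0I)
    have "\<exists>\<omega>. \<forall>j\<in>J. \<omega> \<in> qdH H k j \<and> (\<omega> \<in> qdE E H k j \<longleftrightarrow> j \<in> A)" for A
    proof -
      obtain \<omega> where "\<forall>i\<in>{1..k}. (\<omega> \<in> E i \<longleftrightarrow> i \<in> A) \<and> (\<omega> \<in> H i \<longleftrightarrow> i \<in> UNIV)"
        using constituent by blast
      with J1 False show ?thesis by (auto simp: qdE_def qdH_def)
    qed
    moreover have "\<forall>j\<in>J. 0 \<le> qdP p z j \<and> qdP p z j \<le> 1"
      using J1 False p01 by (auto simp: qdP_def)
    ultimately show ?thesis using J(2) by (intro exists_bet_gain_nonneg_if_all_constituents)
  qed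
qed

section \<open>Necessity of the bounds\<close>

lemma qd_avoids_sure_loss_imp_nonneg:
  assumes "qd_avoids_sure_loss k p z"
    and "\<And>A B. B \<inter> {1..k} \<noteq> {} \<Longrightarrow> constituent_gain k p z s A B \<le> b"
  shows "0 \<le> b"
  using assms unfolding qd_avoids_sure_loss_def by (meson order_trans)

lemma constituent_gain_le_sum:
  assumes "\<forall>i\<in>{1..k}. 0 \<le> p i"
  shows "constituent_gain k p z (\<lambda>j. if j = 0 then 1 else -1) A B \<le> (\<Sum>i=1..k. p i) - z"
proof -
  let ?hit = "\<lambda>j. of_bool (j \<in> B) * of_bool (j \<in> A) :: real"
  have "of_bool (A \<inter> B \<inter> {1..k} \<noteq> {}) \<le> (\<Sum>j=1..k. ?hit j)"
  proof (cases "A \<inter> B \<inter> {1..k} = {}")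
    case True
    then show ?thesis by (simp add: sum_nonneg)
  next
    case False
    then obtain i where i: "i \<in> A \<inter> B \<inter> {1..k}" by blast
    then have "?hit i \<le> (\<Sum>j=1..k. ?hit j)" by (intro member_le_sum) simp_all
    moreover have "?hit i = 1" using i by simp
    ultimately show ?thesis using False by simp
  qed
  moreover have "(\<Sum>j=1..k. of_bool (j \<in> B) * p j) \<le> (\<Sum>j=1..k. p j)"
    using assms by (intro sum_mono) simp
  moreover have "(\<Sum>j=1..k. (if j = 0 then 1 else -1) * of_bool (j \<in> B) * (of_bool (j \<in> A) - p j))
      = (\<Sum>j=1..k. of_bool (j \<in> B) * p j) - (\<Sum>j=1..k. ?hit j)"
    by (simp only: sum_subtractf[symmetric]) (rule sum.cong, auto simp: algebra_simps)
  ultimately show ?thesis unfolding constituent_gain_def by simp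
qed

lemma constituent_gain_le_hamacher_stakes:
  assumes p: "\<forall>i\<in>{1..k}. 0 < p i \<and> p i \<le> 1" and B: "B \<inter> {1..k} \<noteq> {}"
    and l: "l * (1 + (\<Sum>i=1..k. 1 / p i - 1)) = 1" "0 \<le> l"
  shows "constituent_gain k p z (\<lambda>j. if j = 0 then -1 else l / p j) A B \<le> z - l"
proof -
  define g where "g j = l / p j * of_bool (j \<in> B) * (of_bool (j \<in> A) - p j)" for j
  have gain: "constituent_gain k p z (\<lambda>j. if j = 0 then -1 else l / p j) A B
      = z - of_bool (A \<inter> B \<inter> {1..k} \<noteq> {}) + (\<Sum>j=1..k. g j)"
    unfolding constituent_gain_def g_def by simp
  show ?thesis
  proof (cases "A \<inter> B \<inter> {1..k} = {}")
    case True
    obtain i where i: "i \<in> B \<inter> {1..k}" using B by blast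
    have g_nonpos: "\<forall>j\<in>{1..k} - {i}. g j \<le> 0"
      using True p l(2) unfolding g_def by auto
    have "(\<Sum>j=1..k. g j) = g i + (\<Sum>j\<in>{1..k} - {i}. g j)"
      using i by (simp add: sum.remove)
    also have "\<dots> \<le> g i" using g_nonpos by (smt (verit) sum_nonpos)
    also have "g i = - l"
    proof -
      have "i \<notin> A" "i \<in> B" "0 < p i" using True i p by auto
      then show ?thesis unfolding g_def by simp
    qed
    finally show ?thesis using True gain by simp
  next
    case False
    have "g j \<le> l * (1 / p j - 1)" if "j \<in> {1..k}" for j
    proof -
      have "of_bool (j \<in> B) * (of_bool (j \<in> A) - p j) \<le> 1 - p j"
        using p that by (cases "j \<in> B"; cases "j \<in> A") auto
      moreover have "0 < p j" using p that by blast
      moreover from this have "0 \<le> l / p j" using l(2) by simp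
      ultimately have "g j \<le> l / p j * (1 - p j)"
        unfolding g_def by (simp only: mult.assoc mult_left_mono)
      also have "\<dots> = l * (1 / p j - 1)" using \<open>0 < p j\<close> by (simp add: field_simps)
      finally show ?thesis .
    qed
    then have "(\<Sum>j=1..k. g j) \<le> l * (\<Sum>j=1..k. 1 / p j - 1)"
      unfolding sum_distrib_left by (rule sum_mono)
    also have "\<dots> = 1 - l" using l(1) by (simp add: algebra_simps)
    finally show ?thesis using False gain by simp
  qed
qed

lemma qd_avoids_sure_loss_imp_bounds:
  assumes avoids: "qd_avoids_sure_loss k p z" and p01: "\<forall>i\<in>{1..k}. 0 \<le> p i \<and> p i \<le> 1"
  shows "T0H (map p [1..<k+1]) \<le> z" "z \<le> min (\<Sum>i=1..k. p i) 1"
proof -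
  have "0 \<le> 1 - z"
    by (rule qd_avoids_sure_loss_imp_nonneg[OF avoids, where s = "\<lambda>j. if j = 0 then 1 else 0"])
       (simp add: constituent_gain_def)
  moreover have "0 \<le> (\<Sum>i=1..k. p i) - z"
    using p01
    by (intro qd_avoids_sure_loss_imp_nonneg[OF avoids, where s = "\<lambda>j. if j = 0 then 1 else -1"]
        constituent_gain_le_sum) simp
  ultimately show "z \<le> min (\<Sum>i=1..k. p i) 1" by simp
  have "0 \<le> z"
    by (rule qd_avoids_sure_loss_imp_nonneg[OF avoids, where s = "\<lambda>j. if j = 0 then -1 else 0"])
       (simp add: constituent_gain_def)
  show "T0H (map p [1..<k+1]) \<le> z"
  proof (cases "\<exists>i\<in>{1..k}. p i = 0")
    case True
    with \<open>0 \<le> z\<close> show ?thesis using T0H_eq_zero by fastforce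
  next
    case False
    with p01 have p: "\<forall>i\<in>{1..k}. 0 < p i \<and> p i \<le> 1" by force
    define l where "l = T0H (map p [1..<k+1])"
    have "0 \<le> (\<Sum>i=1..k. 1 / p i - 1)" using p by (intro sum_nonneg) simp
    then have l: "l * (1 + (\<Sum>i=1..k. 1 / p i - 1)) = 1" "0 \<le> l"
      unfolding l_def T0H_eq_reciprocal_sum[OF p] by simp_all
    have "0 \<le> z - l"
      by (rule qd_avoids_sure_loss_imp_nonneg[OF avoids])
        (rule constituent_gain_le_hamacher_stakes[OF p _ l])
    then show ?thesis unfolding l_def by simp
  qed
qed

section \<open>Sufficiency of the bounds\<close>

lemma exists_nonneg_of_weighted_sum:
  fixes w f :: "'i \<Rightarrow> real"
  assumes "finite I" "\<forall>i\<in>I. 0 \<le> w i" "0 \<le> v" "0 < v + sum w I"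
    and "0 \<le> v * y + (\<Sum>i\<in>I. w i * f i)"
  shows "0 \<le> y \<or> (\<exists>i\<in>I. 0 \<le> f i)"
proof (rule ccontr)
  assume "\<not> ?thesis"
  then have neg: "y < 0" "\<forall>i\<in>I. f i < 0" by auto
  have terms_nonpos: "\<forall>i\<in>I. w i * f i \<le> 0"
    using neg(2) assms(2) by (meson less_imp_le mult_nonneg_nonpos)
  show False
  proof (cases "v = 0")
    case True
    with assms(4) obtain i where i: "i \<in> I" "0 < w i"
      using sum_nonpos[of I w] assms(2) by (metis add_0 not_le order_antisym)
    have "(\<Sum>i\<in>I. w i * f i) < (\<Sum>i\<in>I. 0)"
      using i neg(2) terms_nonpos assms(1) by (intro sum_strict_mono_ex1) (auto intro: mult_pos_neg)
    with True assms(5) show False by simp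
  next
    case False
    with assms(3) neg(1) have "v * y < 0" by (simp add: mult_pos_neg)
    moreover have "(\<Sum>i\<in>I. w i * f i) \<le> 0" using terms_nonpos by (simp add: sum_nonpos)
    ultimately show False using assms(5) by linarith
  qed
qed

lemma constituent_gain_nonneg_at_positive_stakes:
  assumes p01: "\<forall>i\<in>{1..k}. 0 \<le> p i \<and> p i \<le> 1" and "0 \<le> s 0" "z \<le> 1"
    and "\<exists>j\<in>{1..k}. 0 < s j"
  shows "0 \<le> constituent_gain k p z s {j. 0 < s j} {1..k}"
proof -
  have "0 \<le> s j * (of_bool (0 < s j) - p j)" if "j \<in> {1..k}" for j
    using p01 that by (cases "0 < s j") (auto intro: mult_nonpos_nonneg)
  then have "0 \<le> (\<Sum>j=1..k. s j * (of_bool (0 < s j) - p j))" by (rule sum_nonneg)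
  moreover have "{j. 0 < s j} \<inter> {1..k} \<noteq> {}" using assms(4) by blast
  ultimately show ?thesis
    using assms(2,3) unfolding constituent_gain_all_conditioning by simp
qed

lemma weighted_sum_constituent_gain_single_hits:
  "w * constituent_gain k p z s {} {1..k} + (\<Sum>i=1..k. p i * constituent_gain k p z s {i} {1..k})
     = s 0 * ((\<Sum>i=1..k. p i) - (w + (\<Sum>i=1..k. p i)) * z)
       + (1 - w - (\<Sum>i=1..k. p i)) * (\<Sum>j=1..k. s j * p j)"
proof -
  define S where "S = (\<Sum>i=1..k. p i)"
  define X where "X = (\<Sum>j=1..k. s j * p j)"
  have gain_single: "constituent_gain k p z s {i} {1..k} = s 0 * (1 - z) + s i - X"
    if "i \<in> {1..k}" for i
  proof -
    have "(\<Sum>j=1..k. s j * (of_bool (j \<in> {i}) - p j)) = (\<Sum>j=1..k. if j = i then s j else 0) - X"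
      unfolding X_def sum_subtractf[symmetric] by (rule sum.cong) (auto simp: algebra_simps)
    then show ?thesis using that unfolding constituent_gain_all_conditioning by simp
  qed
  have "(\<Sum>i=1..k. p i * constituent_gain k p z s {i} {1..k})
      = (\<Sum>i=1..k. s 0 * (1 - z) * p i + s i * p i - X * p i)"
  proof (rule sum.cong)
    fix i assume "i \<in> {1..k}"
    then show "p i * constituent_gain k p z s {i} {1..k} = s 0 * (1 - z) * p i + s i * p i - X * p i"
      unfolding gain_single[OF \<open>i \<in> {1..k}\<close>] by (simp add: algebra_simps)
  qed simp
  also have "\<dots> = s 0 * (1 - z) * S + X - X * S"
    by (simp only: sum.distrib sum_subtractf sum_distrib_left S_def X_def)
  finally have hits: "(\<Sum>i=1..k. p i * constituent_gain k p z s {i} {1..k})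
      = s 0 * (1 - z) * S + X - X * S" .
  have empty: "constituent_gain k p z s {} {1..k} = - s 0 * z - X"
    unfolding constituent_gain_all_conditioning X_def by (simp add: sum_negf)
  show ?thesis unfolding hits empty S_def[symmetric] X_def[symmetric] by (simp add: algebra_simps)
qed

lemma weighted_sum_constituent_gain_single_conditionings:
  assumes p: "\<forall>i\<in>{1..k}. 0 < p i" and "0 < k"
  shows "constituent_gain k p z s {1..k} {1..k}
           + (\<Sum>i=1..k. (1 - p i) / p i * constituent_gain k p z s {} {i})
         = s 0 * (1 - z * (1 + (\<Sum>i=1..k. 1 / p i - 1)))"
proof -
  have "(\<Sum>j=1..k. s j * (of_bool (j \<in> {1..k}) - p j)) = (\<Sum>j=1..k. s j * (1 - p j))"
    by (rule sum.cong) auto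
  with \<open>0 < k\<close> have full:
      "constituent_gain k p z s {1..k} {1..k} = s 0 * (1 - z) + (\<Sum>j=1..k. s j * (1 - p j))"
    unfolding constituent_gain_all_conditioning by simp
  have "(1 - p i) / p i * constituent_gain k p z s {} {i}
      = - s 0 * z * (1 / p i - 1) - s i * (1 - p i)" if "i \<in> {1..k}" for i
  proof -
    have "0 < p i" using that p by blast
    then show ?thesis
      unfolding constituent_gain_single_conditioning[OF that] by (simp add: field_simps)
  qed
  then have "(\<Sum>i=1..k. (1 - p i) / p i * constituent_gain k p z s {} {i})
      = (\<Sum>i=1..k. - s 0 * z * (1 / p i - 1) - s i * (1 - p i))"
    by (intro sum.cong) auto
  also have "\<dots> = - s 0 * z * (\<Sum>i=1..k. 1 / p i - 1) - (\<Sum>j=1..k. s j * (1 - p j))"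
    by (subst sum_subtractf) (simp only: sum_distrib_left)
  finally show ?thesis unfolding full by (simp add: algebra_simps)
qed

lemma exists_constituent_gain_nonneg_if_nonneg_stake:
  assumes p01: "\<forall>i\<in>{1..k}. 0 \<le> p i \<and> p i \<le> 1" and "0 < k"
    and z: "z \<le> min (\<Sum>i=1..k. p i) 1" and c: "0 \<le> s 0"
  shows "\<exists>A B. B \<inter> {1..k} \<noteq> {} \<and> 0 \<le> constituent_gain k p z s A B"
proof (cases "\<exists>j\<in>{1..k}. 0 < s j")
  case True
  with p01 c z have "0 \<le> constituent_gain k p z s {j. 0 < s j} {1..k}"
    by (intro constituent_gain_nonneg_at_positive_stakes) simp_all
  with \<open>0 < k\<close> show ?thesis by (intro exI conjI) auto
next
  case False
  define S where "S = (\<Sum>i=1..k. p i)"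
  define X where "X = (\<Sum>j=1..k. s j * p j)"
  have "0 \<le> S" unfolding S_def using p01 by (intro sum_nonneg) simp
  have "s j * p j \<le> 0" if "j \<in> {1..k}" for j
    using False p01 that by (meson mult_nonpos_nonneg not_less)
  then have "X \<le> 0" unfolding X_def by (rule sum_nonpos)
  have "0 \<le> s 0 * (S - (max S 1 - S + S) * z)"
    using c z \<open>0 \<le> S\<close> unfolding S_def[symmetric]
    by (cases "S \<le> 1") (auto simp: max_def mult_left_le)
  moreover have "0 \<le> (1 - (max S 1 - S) - S) * X" using \<open>X \<le> 0\<close> by (simp add: mult_nonpos_nonpos)
  ultimately have "0 \<le> (max S 1 - S) * constituent_gain k p z s {} {1..k}
      + (\<Sum>i=1..k. p i * constituent_gain k p z s {i} {1..k})"
    unfolding weighted_sum_constituent_gain_single_hits S_def[symmetric] X_def[symmetric] by linarith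
  then have "0 \<le> constituent_gain k p z s {} {1..k}
      \<or> (\<exists>i\<in>{1..k}. 0 \<le> constituent_gain k p z s {i} {1..k})"
    using p01 unfolding S_def by (intro exists_nonneg_of_weighted_sum) auto
  moreover have "{1..k} \<inter> {1..k} \<noteq> {}" using \<open>0 < k\<close> by simp
  ultimately show ?thesis by blast
qed

lemma exists_constituent_gain_nonneg_if_nonpos_stake:
  assumes p01: "\<forall>i\<in>{1..k}. 0 \<le> p i \<and> p i \<le> 1" and "0 < k"
    and z: "T0H (map p [1..<k+1]) \<le> z" and c: "s 0 \<le> 0"
  shows "\<exists>A B. B \<inter> {1..k} \<noteq> {} \<and> 0 \<le> constituent_gain k p z s A B"
proof (cases "\<exists>i\<in>{1..k}. p i = 0")
  case True
  then obtain i where i: "i \<in> {1..k}" "p i = 0" by blast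
  then have "0 \<le> z" using z T0H_eq_zero by metis
  with i c have "0 \<le> constituent_gain k p z s {} {i}"
    by (simp add: constituent_gain_single_conditioning mult_nonpos_nonneg)
  with i show ?thesis by blast
next
  case False
  with p01 have p: "\<forall>i\<in>{1..k}. 0 < p i \<and> p i \<le> 1" by force
  define S where "S = (\<Sum>i=1..k. 1 / p i - 1)"
  have "0 \<le> S" unfolding S_def using p by (intro sum_nonneg) simp
  have "1 \<le> z * (1 + S)"
    using z \<open>0 \<le> S\<close> unfolding T0H_eq_reciprocal_sum[OF p] S_def[symmetric]
    by (simp add: divide_le_eq)
  with c have "0 \<le> 1 * constituent_gain k p z s {1..k} {1..k}
      + (\<Sum>i=1..k. (1 - p i) / p i * constituent_gain k p z s {} {i})"
    using weighted_sum_constituent_gain_single_conditionings[of k p z s] p \<open>0 < k\<close>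
    unfolding S_def[symmetric] by (simp add: mult_nonpos_nonpos)
  moreover have w: "\<forall>i\<in>{1..k}. 0 \<le> (1 - p i) / p i"
    using p by (auto intro!: divide_nonneg_pos)
  moreover have "0 \<le> (\<Sum>i=1..k. (1 - p i) / p i)" by (rule sum_nonneg) (use w in blast)
  ultimately have "0 \<le> constituent_gain k p z s {1..k} {1..k}
      \<or> (\<exists>i\<in>{1..k}. 0 \<le> constituent_gain k p z s {} {i})"
    by (intro exists_nonneg_of_weighted_sum[where v = 1 and w = "\<lambda>i. (1 - p i) / p i"]) auto
  moreover have "{1..k} \<inter> {1..k} \<noteq> {}" using \<open>0 < k\<close> by simp
  ultimately show ?thesis by blast
qed

lemma qd_avoids_sure_loss_if_bounds:
  assumes "\<forall>i\<in>{1..k}. 0 \<le> p i \<and> p i \<le> 1" "0 < k"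
    and "T0H (map p [1..<k+1]) \<le> z" "z \<le> min (\<Sum>i=1..k. p i) 1"
  shows "qd_avoids_sure_loss k p z"
  unfolding qd_avoids_sure_loss_def
proof
  fix s
  show "\<exists>A B. B \<inter> {1..k} \<noteq> {} \<and> 0 \<le> constituent_gain k p z s A B"
  proof (cases "0 \<le> s 0")
    case True
    then show ?thesis using assms by (intro exists_constituent_gain_nonneg_if_nonneg_stake)
  next
    case False
    then show ?thesis using assms by (intro exists_constituent_gain_nonneg_if_nonpos_stake) simp_all
  qed
qed

theorem theorem8:
  fixes E H :: "nat \<Rightarrow> 'a set" and p :: "nat \<Rightarrow> real" and n k :: nat
  assumes "logically_independent (\<lambda>(i, b). if b then E i else H i) ({1..n} \<times> UNIV)"
    and "\<forall>i\<in>{1..n}. p i \<in> {0..1}"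
    and "2 \<le> k" and "k \<le> n"
  shows "{z. coherent (qdE E H k) (qdH H k) (qdP p z) {0..k}}
         = {T0H (map p [1..<k+1]) .. min (\<Sum>i=1..k. p i) 1}"
proof -
  have p01: "\<forall>i\<in>{1..k}. 0 \<le> p i \<and> p i \<le> 1" using assms(2,4) by force
  have "0 < k" using assms(3) by simp
  have iff: "coherent (qdE E H k) (qdH H k) (qdP p z) {0..k}
      \<longleftrightarrow> T0H (map p [1..<k+1]) \<le> z \<and> z \<le> min (\<Sum>i=1..k. p i) 1" for z
  proof
    assume "coherent (qdE E H k) (qdH H k) (qdP p z) {0..k}"
    then have "qd_avoids_sure_loss k p z" by (rule coherent_qd_imp_avoids_sure_loss)
    from qd_avoids_sure_loss_imp_bounds[OF this p01]
    show "T0H (map p [1..<k+1]) \<le> z \<and> z \<le> min (\<Sum>i=1..k. p i) 1" ..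
  next
    assume "T0H (map p [1..<k+1]) \<le> z \<and> z \<le> min (\<Sum>i=1..k. p i) 1"
    with p01 \<open>0 < k\<close> have "qd_avoids_sure_loss k p z"
      using qd_avoids_sure_loss_if_bounds by simp
    with assms(1,4) p01 show "coherent (qdE E H k) (qdH H k) (qdP p z) {0..k}"
      by (rule coherent_qd_if_avoids_sure_loss)
  qed
  show ?thesis unfolding set_eq_iff mem_Collect_eq atLeastAtMost_iff iff by simp
qed

end
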